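(* Let $n\ge1$ and let $U\in\mathcal{C}_2^{(n)}$ be a Clifford unitary with Pauli periodicity $m\ge 1$. Then $(CU)^{-1}=C(U^{-1})$, where $U^{-1}\in\mathcal{C}_2^{(n)}$ again has Pauli periodicity $m$, and consequently $(CU)^{-1}\in\mathcal{C}_{m+2}^{(n+1)}\setminus\mathcal{C}_{m+1}^{(n+1)}$, i.e. $(CU)^{-1}$ lies in the same (strict) level of the Clifford hierarchy as $CU$.
   Context: The $n$-qubit Pauli group is $\mathcal{P}_n=\{\omega P_1\otimes\cdots\otimes P_n:\ \omega\in\{\pm1,\pm \mathrm{i}\},\ P_j\in\{I,X,Y,Z\}\}$. The Clifford hierarchy: $\mathcal{C}_1^{(n)}:=\mathcal{P}_n$, $\mathcal{C}_{k+1}^{(n)}:=\{U\in U(2^n):\ UPU^\dagger\in\mathcal{C}_k^{(n)}\ \forall P\in\mathcal{P}_n\}$; $\mathcal{C}_2^{(n)}$ is the Clifford group. $CU:=\ket{0}\!\bra{0}\otimes I_{2^n}+\ket{1}\!\bra{1}\otimes U$ (first qubit is the control). The Pauli periodicity of $U$ is $\min\{t\ge 0:\ U^{2^t}\in\mathcal{P}_n\}$ (exact membership in $\mathcal{P}_n$). *)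

theory Defs
  imports Complex_Main "Jordan_Normal_Form.Matrix"
begin

definition adj :: "complex mat \<Rightarrow> complex mat" where
  "adj A = mat (dim_col A) (dim_row A) (\<lambda>(i,j). cnj (A $$ (j,i)))"

definition unitary_mat :: "nat \<Rightarrow> complex mat \<Rightarrow> bool" where
  "unitary_mat d U \<longleftrightarrow> U \<in> carrier_mat d d \<and> U * adj U = 1\<^sub>m d \<and> adj U * U = 1\<^sub>m d"

text \<open>Kronecker (tensor) product; the first factor indexes the most significant part.\<close>
definition kron :: "complex mat \<Rightarrow> complex mat \<Rightarrow> complex mat" where
  "kron A B = mat (dim_row A * dim_row B) (dim_col A * dim_col B)
     (\<lambda>(i,j). A $$ (i div dim_row B, j div dim_col B) * B $$ (i mod dim_row B, j mod dim_col B))"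

fun kron_list :: "complex mat list \<Rightarrow> complex mat" where
  "kron_list [] = 1\<^sub>m 1"
| "kron_list (A # As) = kron A (kron_list As)"

definition pauli_I :: "complex mat" where "pauli_I = mat_of_rows_list 2 [[1,0],[0,1]]"
definition pauli_X :: "complex mat" where "pauli_X = mat_of_rows_list 2 [[0,1],[1,0]]"
definition pauli_Y :: "complex mat" where "pauli_Y = mat_of_rows_list 2 [[0,-\<i>],[\<i>,0]]"
definition pauli_Z :: "complex mat" where "pauli_Z = mat_of_rows_list 2 [[1,0],[0,-1]]"

definition pauli_group :: "nat \<Rightarrow> complex mat set" where
  "pauli_group n = {\<omega> \<cdot>\<^sub>m kron_list Ps | \<omega> Ps.
      \<omega> \<in> {1, -1, \<i>, -\<i>} \<and> length Ps = n \<and> set Ps \<subseteq> {pauli_I, pauli_X, pauli_Y, pauli_Z}}"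

text \<open>Clifford hierarchy: clifford_level n k is C_k^{(n)} for k \<ge> 1 (level 0 is unused).\<close>
fun clifford_level :: "nat \<Rightarrow> nat \<Rightarrow> complex mat set" where
  "clifford_level n 0 = {}"
| "clifford_level n (Suc 0) = pauli_group n"
| "clifford_level n (Suc (Suc k)) =
     {U. unitary_mat (2^n) U \<and> (\<forall>P \<in> pauli_group n. U * P * adj U \<in> clifford_level n (Suc k))}"

definition ket0bra0 :: "complex mat" where "ket0bra0 = mat_of_rows_list 2 [[1,0],[0,0]]"
definition ket1bra1 :: "complex mat" where "ket1bra1 = mat_of_rows_list 2 [[0,0],[0,1]]"

definition controlled :: "nat \<Rightarrow> complex mat \<Rightarrow> complex mat" where
  "controlled n U = kron ket0bra0 (1\<^sub>m (2^n)) + kron ket1bra1 U"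

definition pauli_periodicity :: "nat \<Rightarrow> complex mat \<Rightarrow> nat \<Rightarrow> bool" where
  "pauli_periodicity n U m \<longleftrightarrow>
     (U ^\<^sub>m (2^m)) \<in> pauli_group n \<and> (\<forall>t<m. (U ^\<^sub>m (2^t)) \<notin> pauli_group n)"

end

theory Submission
  imports Defs
begin

text \<open>
  Split matrices of dimension 2^(n+1) into 2 x 2 blocks of size 2^n. Then CU = diag(1, U), and every
  (n+1)-qubit Pauli is a \<otimes> Q with a one of I, X, Y, Z and Q an n-qubit Pauli.

  Conjugating a \<otimes> Q by CU gives, up to the Pauli factor a \<otimes> 1 on the left,
  diag(Q, U Q U\<dagger>) when a is I or Z, and diag(U, U\<dagger>) diag(Q, U Q U\<dagger>) when a is X or Y.
  For Clifford U the block diagonal diag(Q, U Q U\<dagger>) is Clifford, and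
  diag(U, U\<dagger>) = C((U\<dagger>)^2) (I \<otimes> U), where (U\<dagger>)^2 is Clifford and needs one squaring
  fewer than U to reach the Pauli group. Induction on m shows that CU lies in level m + 2
  whenever U^(2^m) is a Pauli.

  For W = diag(A, B) the group commutator W (X \<otimes> 1) W\<dagger> (X \<otimes> 1) equals
  diag(A B\<dagger>, B A\<dagger>) and lies one level below W. Starting from CU in level k + 2 and
  taking k + 1 such commutators leaves diag((U\<dagger>)^(2^k), U^(2^k)) in the Pauli group, so
  U^(2^k) is a Pauli.

  Finally (CU)^(-1) = C(U\<dagger>), and U\<dagger> is Clifford with the same Pauli periodicity as U.
\<close>

section \<open>Two-by-two matrices, adjoints and Kronecker products\<close>

definition mat2 :: "complex \<Rightarrow> complex \<Rightarrow> complex \<Rightarrow> complex \<Rightarrow> complex mat" where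
  "mat2 a b c d = mat_of_rows_list 2 [[a, b], [c, d]]"

lemma mat2_carrier [simp]: "mat2 a b c d \<in> carrier_mat 2 2"
  and dim_row_mat2 [simp]: "dim_row (mat2 a b c d) = 2"
  and dim_col_mat2 [simp]: "dim_col (mat2 a b c d) = 2"
  by (auto simp: mat2_def mat_of_rows_list_def)

lemma index_mat2 [simp]:
  "mat2 a b c d $$ (0, 0) = a" "mat2 a b c d $$ (0, 1) = b"
  "mat2 a b c d $$ (1, 0) = c" "mat2 a b c d $$ (1, 1) = d"
  "mat2 a b c d $$ (0, Suc 0) = b" "mat2 a b c d $$ (Suc 0, 0) = c" "mat2 a b c d $$ (Suc 0, Suc 0) = d"
  by (auto simp: mat2_def mat_of_rows_list_def)

lemma mat2_eq_iff: "mat2 a b c d = mat2 a' b' c' d' \<longleftrightarrow> a = a' \<and> b = b' \<and> c = c' \<and> d = d'"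
  by (metis index_mat2(1-4))

lemma mat2_eqI:
  assumes "M \<in> carrier_mat 2 2"
    and "M $$ (0, 0) = a" "M $$ (0, 1) = b" "M $$ (1, 0) = c" "M $$ (1, 1) = d"
  shows "M = mat2 a b c d"
  by (rule eq_matI) (use assms in \<open>auto simp: less_2_cases_iff\<close>)

lemma mat2_expand: "M \<in> carrier_mat 2 2 \<Longrightarrow> M = mat2 (M $$ (0, 0)) (M $$ (0, 1)) (M $$ (1, 0)) (M $$ (1, 1))"
  by (rule mat2_eqI) auto

lemma mult_mat2 [simp]:
  "mat2 a b c d * mat2 e f g h = mat2 (a*e + b*g) (a*f + b*h) (c*e + d*g) (c*f + d*h)"
  by (rule mat2_eqI) (auto simp: scalar_prod_def col_def row_def numeral_2_eq_2 lessThan_Suc)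

lemma smult_mat2 [simp]: "k \<cdot>\<^sub>m mat2 a b c d = mat2 (k*a) (k*b) (k*c) (k*d)"
  by (rule mat2_eqI) auto

lemma one_mat2: "1\<^sub>m 2 = mat2 1 0 0 1"
  by (rule mat2_eqI) auto

lemma one_smult_mat: "(1::complex) \<cdot>\<^sub>m M = M"
  by (rule eq_matI) auto

lemma paulis_mat2:
  "pauli_I = mat2 1 0 0 1" "pauli_X = mat2 0 1 1 0"
  "pauli_Y = mat2 0 (-\<i>) \<i> 0" "pauli_Z = mat2 1 0 0 (-1)"
  by (simp_all add: mat2_def pauli_I_def pauli_X_def pauli_Y_def pauli_Z_def)

lemma projectors_mat2: "ket0bra0 = mat2 1 0 0 0" "ket1bra1 = mat2 0 0 0 1"
  by (simp_all add: mat2_def ket0bra0_def ket1bra1_def)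

lemma index_adj [simp]: "i < dim_col A \<Longrightarrow> j < dim_row A \<Longrightarrow> adj A $$ (i, j) = cnj (A $$ (j, i))"
  by (simp add: adj_def)

lemma dim_row_adj [simp]: "dim_row (adj A) = dim_col A"
  and dim_col_adj [simp]: "dim_col (adj A) = dim_row A"
  unfolding adj_def by (simp_all del: index_adj)

lemma adj_carrier_mat: "A \<in> carrier_mat r c \<Longrightarrow> adj A \<in> carrier_mat c r"
  unfolding carrier_mat_def by simp

lemma adj_adj [simp]: "adj (adj A) = A"
  by (rule eq_matI) auto

lemma adj_one [simp]: "adj (1\<^sub>m N) = 1\<^sub>m N"
  by (rule eq_matI) auto

lemma adj_zero [simp]: "adj (0\<^sub>m N M) = 0\<^sub>m M N"
  by (rule eq_matI) auto

lemma adj_smult: "adj (k \<cdot>\<^sub>m A) = cnj k \<cdot>\<^sub>m adj A"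
  by (rule eq_matI) auto

lemma adj_mult:
  assumes "A \<in> carrier_mat a b" "B \<in> carrier_mat b c"
  shows "adj (A * B) = adj B * adj A"
  by (rule eq_matI) (use assms in \<open>auto simp: scalar_prod_def mult.commute intro!: sum.cong\<close>)

lemma adj_four_block_mat:
  assumes "A \<in> carrier_mat N N" "B \<in> carrier_mat N N" "C \<in> carrier_mat N N" "D \<in> carrier_mat N N"
  shows "adj (four_block_mat A B C D) = four_block_mat (adj A) (adj C) (adj B) (adj D)"
  by (rule eq_matI) (use assms in auto)

lemma adj_mat2 [simp]: "adj (mat2 a b c d) = mat2 (cnj a) (cnj c) (cnj b) (cnj d)"
  by (rule mat2_eqI) (auto simp: adj_carrier_mat)

lemma assoc_mult_square:
  "A \<in> carrier_mat N N \<Longrightarrow> B \<in> carrier_mat N N \<Longrightarrow> C \<in> carrier_mat N N \<Longrightarrow> A * B * C = A * (B * C)"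
  by (rule assoc_mult_mat)

lemma mult_smult_assoc_dim: "dim_col A = dim_row B \<Longrightarrow> (k \<cdot>\<^sub>m A) * B = (k::complex) \<cdot>\<^sub>m (A * B)"
  by (rule mult_smult_assoc_mat[of A "dim_row A" "dim_col A" B "dim_col B"]) (auto intro: carrier_matI)

lemma mult_smult_distrib_dim: "dim_col A = dim_row B \<Longrightarrow> A * (k \<cdot>\<^sub>m B) = (k::complex) \<cdot>\<^sub>m (A * B)"
  by (rule mult_smult_distrib[of A "dim_row A" "dim_col A" B "dim_col B"]) (auto intro: carrier_matI)

lemma unitary_mat_carrier: "unitary_mat N A \<Longrightarrow> A \<in> carrier_mat N N"
  by (simp add: unitary_mat_def)

lemma unitary_mat_adj: "unitary_mat N A \<Longrightarrow> unitary_mat N (adj A)"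
  by (auto simp: unitary_mat_def adj_carrier_mat)

lemma unitary_mat_mult:
  assumes A: "unitary_mat N A" and B: "unitary_mat N B"
  shows "unitary_mat N (A * B)"
proof -
  have c: "A \<in> carrier_mat N N" "B \<in> carrier_mat N N" "adj A \<in> carrier_mat N N" "adj B \<in> carrier_mat N N"
    using A B by (auto simp: unitary_mat_def adj_carrier_mat)
  have u: "A * adj A = 1\<^sub>m N" "adj A * A = 1\<^sub>m N" "B * adj B = 1\<^sub>m N" "adj B * B = 1\<^sub>m N"
    using A B by (auto simp: unitary_mat_def)
  have "A * B * adj (A * B) = A * (B * adj B) * adj A"
    using c by (simp add: adj_mult[OF c(1,2)] assoc_mult_square)
  moreover have "adj (A * B) * (A * B) = adj B * (adj A * A) * B"
    using c by (simp add: adj_mult[OF c(1,2)] assoc_mult_square)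
  ultimately show ?thesis
    using c u by (simp add: unitary_mat_def)
qed

lemma unitary_mat_inverse_eq_adj:
  assumes U: "unitary_mat N U" and V: "V \<in> carrier_mat N N" and VU: "V * U = 1\<^sub>m N"
  shows "V = adj U"
proof -
  have cU: "U \<in> carrier_mat N N" "adj U \<in> carrier_mat N N"
    using U by (auto simp: unitary_mat_def adj_carrier_mat)
  have "V = V * (U * adj U)" using U V by (simp add: unitary_mat_def)
  also have "\<dots> = (V * U) * adj U" using V cU by (simp add: assoc_mult_square)
  finally show ?thesis using VU cU by simp
qed

lemma pow_mat_commute: "A \<in> carrier_mat N N \<Longrightarrow> A * A ^\<^sub>m k = A ^\<^sub>m k * A"
proof (induction k)
  case (Suc k)
  have "A * A ^\<^sub>m Suc k = (A * A ^\<^sub>m k) * A"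
    using assoc_mult_square[of A N "A ^\<^sub>m k" A] Suc.prems by simp
  also have "\<dots> = A ^\<^sub>m Suc k * A" using Suc by simp
  finally show ?case .
qed simp

lemma pow_mat_mult_self: "A \<in> carrier_mat N N \<Longrightarrow> (A * A) ^\<^sub>m k = A ^\<^sub>m (2 * k)"
proof (induction k)
  case (Suc k)
  have "(A * A) ^\<^sub>m Suc k = A ^\<^sub>m (2 * k) * (A * A)" using Suc by simp
  also have "\<dots> = A ^\<^sub>m (2 * k) * A * A"
    using assoc_mult_square[of "A ^\<^sub>m (2 * k)" N A A] Suc.prems by simp
  finally show ?case by simp
qed simp

lemma adj_pow_mat: "A \<in> carrier_mat N N \<Longrightarrow> adj (A ^\<^sub>m k) = adj A ^\<^sub>m k"
proof (induction k)
  case (Suc k)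
  have c: "A ^\<^sub>m k \<in> carrier_mat N N" "adj A \<in> carrier_mat N N"
    using Suc.prems by (simp_all add: adj_carrier_mat)
  have "adj (A ^\<^sub>m Suc k) = adj A * adj A ^\<^sub>m k" using adj_mult[OF c(1) Suc.prems] Suc.IH[OF Suc.prems] by simp
  also have "\<dots> = adj A ^\<^sub>m Suc k" using pow_mat_commute[OF c(2)] by simp
  finally show ?case .
qed simp

lemma div_mod_upper_half:
  assumes "(N::nat) \<le> i" "i < N + N"
  shows "i div N = 1" "i mod N = i - N"
  using assms le_div_geq[of N i] le_mod_geq[of N i] by auto

lemma kron_mat2:
  assumes Q: "Q \<in> carrier_mat N N"
  shows "kron (mat2 p q r s) Q = four_block_mat (p \<cdot>\<^sub>m Q) (q \<cdot>\<^sub>m Q) (r \<cdot>\<^sub>m Q) (s \<cdot>\<^sub>m Q)"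
    (is "?K = ?B")
proof (rule eq_matI)
  fix i j assume "i < dim_row ?B" "j < dim_col ?B"
  then have "i < N + N" "j < N + N" using Q by auto
  then show "?K $$ (i, j) = ?B $$ (i, j)"
    using Q div_mod_upper_half[of N i] div_mod_upper_half[of N j]
    by (cases "i < N"; cases "j < N"; simp add: kron_def)
qed (use Q in \<open>auto simp: kron_def\<close>)

lemma kron_carrier_mat: "a \<in> carrier_mat 2 2 \<Longrightarrow> Q \<in> carrier_mat N N \<Longrightarrow> kron a Q \<in> carrier_mat (2*N) (2*N)"
  unfolding kron_def carrier_mat_def by simp

lemma adj_kron:
  assumes a: "a \<in> carrier_mat 2 2" and Q: "Q \<in> carrier_mat N N"
  shows "adj (kron a Q) = kron (adj a) (adj Q)"
proof -
  obtain p q r s where a_eq: "a = mat2 p q r s" using mat2_expand[OF a] by blast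
  have "adj Q \<in> carrier_mat N N" using Q by (rule adj_carrier_mat)
  then show ?thesis
    unfolding a_eq adj_mat2 kron_mat2[OF Q] kron_mat2[OF \<open>adj Q \<in> _\<close>]
    by (subst adj_four_block_mat[where N = N]) (use Q in \<open>auto simp: adj_smult\<close>)
qed

lemma kron_mult:
  assumes a: "a \<in> carrier_mat 2 2" and b: "b \<in> carrier_mat 2 2"
    and Q: "Q \<in> carrier_mat N N" and R: "R \<in> carrier_mat N N"
  shows "kron a Q * kron b R = kron (a * b) (Q * R)"
proof -
  obtain p q r s where ap: "a = mat2 p q r s" using mat2_expand[OF a] by blast
  obtain e f g h where bp: "b = mat2 e f g h" using mat2_expand[OF b] by blast
  have blocks: "(x \<cdot>\<^sub>m Q) * (y \<cdot>\<^sub>m R) + (x' \<cdot>\<^sub>m Q) * (y' \<cdot>\<^sub>m R) = (x*y + x'*y') \<cdot>\<^sub>m (Q * R)" for x y x' y'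
  proof -
    have "(z \<cdot>\<^sub>m Q) * (w \<cdot>\<^sub>m R) = z \<cdot>\<^sub>m (w \<cdot>\<^sub>m (Q * R))" for z w
      using Q R by (simp add: mult_smult_assoc_mat[of Q N N "w \<cdot>\<^sub>m R" N] mult_smult_distrib)
    then show ?thesis
      by simp (rule eq_matI, use Q R in \<open>auto simp: algebra_simps\<close>)
  qed
  have "Q * R \<in> carrier_mat N N" using Q R by simp
  then show ?thesis
    unfolding ap bp mult_mat2 kron_mat2[OF Q] kron_mat2[OF R] kron_mat2[OF \<open>Q * R \<in> _\<close>]
    by (subst mult_four_block_mat[of _ N N _ N _ N _ _ N _ N]) (use Q R in \<open>auto simp: blocks\<close>)
qed

lemma kron_smult_right:
  assumes "a \<in> carrier_mat 2 2" "Q \<in> carrier_mat N N"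
  shows "kron a (k \<cdot>\<^sub>m Q) = k \<cdot>\<^sub>m kron a Q"
  by (rule eq_matI) (use assms in \<open>auto simp: kron_def\<close>)

lemma kron_smult_left:
  assumes "a \<in> carrier_mat 2 2" "Q \<in> carrier_mat N N"
  shows "kron (k \<cdot>\<^sub>m a) Q = k \<cdot>\<^sub>m kron a Q"
  by (rule eq_matI) (use assms in \<open>auto simp: kron_def less_mult_imp_div_less\<close>)

lemma kron_one: "kron (1\<^sub>m 2) (1\<^sub>m N) = 1\<^sub>m (2*N)"
  unfolding one_mat2 kron_mat2[OF one_carrier_mat] by (auto simp: mult_2 intro!: eq_matI)

section \<open>The Pauli group\<close>

definition pauli_basis :: "complex mat set" where
  "pauli_basis = {pauli_I, pauli_X, pauli_Y, pauli_Z}"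

definition pauli_phases :: "complex set" where
  "pauli_phases = {1, -1, \<i>, -\<i>}"

lemma pauli_basis_carrier: "a \<in> pauli_basis \<Longrightarrow> a \<in> carrier_mat 2 2"
  by (auto simp: pauli_basis_def paulis_mat2)

lemma pauli_basis_mult:
  "a \<in> pauli_basis \<Longrightarrow> b \<in> pauli_basis \<Longrightarrow> \<exists>w\<in>pauli_phases. \<exists>c\<in>pauli_basis. a * b = w \<cdot>\<^sub>m c"
  unfolding pauli_basis_def pauli_phases_def paulis_mat2
  by (elim insertE emptyE; simp add: mat2_eq_iff)

lemma pauli_basis_conj:
  "a \<in> pauli_basis \<Longrightarrow> b \<in> pauli_basis \<Longrightarrow> a * b * adj a = b \<or> a * b * adj a = (-1) \<cdot>\<^sub>m b"
  unfolding pauli_basis_def paulis_mat2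
  by (elim insertE emptyE; simp add: mat2_eq_iff)

lemma pauli_basis_mult_self: "a \<in> pauli_basis \<Longrightarrow> a * a = 1\<^sub>m 2"
  unfolding pauli_basis_def paulis_mat2 one_mat2
  by (elim insertE emptyE; simp add: mat2_eq_iff)

lemma pauli_basis_adj: "a \<in> pauli_basis \<Longrightarrow> adj a = a"
  unfolding pauli_basis_def paulis_mat2
  by (elim insertE emptyE; simp add: mat2_eq_iff)

lemma pauli_phases_mult: "w \<in> pauli_phases \<Longrightarrow> v \<in> pauli_phases \<Longrightarrow> w * v \<in> pauli_phases"
  and pauli_phases_cnj: "w \<in> pauli_phases \<Longrightarrow> cnj w \<in> pauli_phases"
  and pauli_phases_mult_cnj: "w \<in> pauli_phases \<Longrightarrow> w * cnj w = 1"
  and pauli_phases_cnj_cases: "w \<in> pauli_phases \<Longrightarrow> cnj w = w \<or> cnj w = -1 * w"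
  by (auto simp: pauli_phases_def)

lemma pauli_group_phases_basis:
  "pauli_group n = {w \<cdot>\<^sub>m kron_list Ps | w Ps. w \<in> pauli_phases \<and> length Ps = n \<and> set Ps \<subseteq> pauli_basis}"
  unfolding pauli_group_def pauli_phases_def pauli_basis_def by simp

lemma kron_list_carrier:
  "set Ps \<subseteq> pauli_basis \<Longrightarrow> kron_list Ps \<in> carrier_mat (2 ^ length Ps) (2 ^ length Ps)"
  by (induction Ps) (auto simp: pauli_basis_carrier kron_carrier_mat)

lemma pauli_group_0: "pauli_group 0 = {w \<cdot>\<^sub>m 1\<^sub>m 1 | w. w \<in> pauli_phases}"
  unfolding pauli_group_phases_basis by auto

lemma pauli_group_SucE:
  assumes "P \<in> pauli_group (Suc n)"
  obtains a Q where "P = kron a Q" "a \<in> pauli_basis" "Q \<in> pauli_group n"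
proof -
  obtain w Ps where P: "P = w \<cdot>\<^sub>m kron_list Ps" "w \<in> pauli_phases" "length Ps = Suc n" "set Ps \<subseteq> pauli_basis"
    using assms unfolding pauli_group_phases_basis by blast
  then obtain a Ps' where Ps: "Ps = a # Ps'" by (cases Ps) auto
  have c: "a \<in> carrier_mat 2 2" "kron_list Ps' \<in> carrier_mat (2^n) (2^n)"
    using P Ps kron_list_carrier[of Ps'] by (auto simp: pauli_basis_carrier)
  have "P = kron a (w \<cdot>\<^sub>m kron_list Ps')"
    using P(1) Ps kron_smult_right[OF c] by simp
  moreover have "w \<cdot>\<^sub>m kron_list Ps' \<in> pauli_group n"
    using P Ps unfolding pauli_group_phases_basis by auto
  moreover have "a \<in> pauli_basis" using P Ps by auto
  ultimately show ?thesis using that by blast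
qed

lemma pauli_group_SucI:
  assumes "a \<in> pauli_basis" "Q \<in> pauli_group n"
  shows "kron a Q \<in> pauli_group (Suc n)"
proof -
  obtain w Ps where Q: "Q = w \<cdot>\<^sub>m kron_list Ps" "w \<in> pauli_phases" "length Ps = n" "set Ps \<subseteq> pauli_basis"
    using assms unfolding pauli_group_phases_basis by blast
  have c: "a \<in> carrier_mat 2 2" "kron_list Ps \<in> carrier_mat (2^n) (2^n)"
    using Q assms kron_list_carrier[of Ps] by (auto simp: pauli_basis_carrier)
  have "kron a Q = w \<cdot>\<^sub>m kron_list (a # Ps)" using Q(1) kron_smult_right[OF c] by simp
  moreover have "length (a # Ps) = Suc n" "set (a # Ps) \<subseteq> pauli_basis" using Q assms by auto
  ultimately show ?thesis unfolding pauli_group_phases_basis using Q(2) by blast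
qed

lemma pauli_group_carrier: "P \<in> pauli_group n \<Longrightarrow> P \<in> carrier_mat (2^n) (2^n)"
  unfolding pauli_group_phases_basis using kron_list_carrier by fastforce

lemma pauli_group_smult: "w \<in> pauli_phases \<Longrightarrow> P \<in> pauli_group n \<Longrightarrow> w \<cdot>\<^sub>m P \<in> pauli_group n"
proof -
  assume w: "w \<in> pauli_phases" and "P \<in> pauli_group n"
  then obtain v Ps where P: "P = v \<cdot>\<^sub>m kron_list Ps" "v \<in> pauli_phases" "length Ps = n" "set Ps \<subseteq> pauli_basis"
    unfolding pauli_group_phases_basis by blast
  have "w \<cdot>\<^sub>m P = (w * v) \<cdot>\<^sub>m kron_list Ps" using P(1) by (auto intro!: eq_matI)
  then show ?thesis unfolding pauli_group_phases_basis using P pauli_phases_mult[OF w P(2)] by blast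
qed

lemma pauli_group_uminus: "P \<in> pauli_group n \<Longrightarrow> (-1) \<cdot>\<^sub>m P \<in> pauli_group n"
  by (rule pauli_group_smult) (auto simp: pauli_phases_def)

lemma pauli_group_one: "1\<^sub>m (2^n) \<in> pauli_group n"
proof (induction n)
  case 0
  have "1\<^sub>m 1 = (1::complex) \<cdot>\<^sub>m 1\<^sub>m 1" by (simp add: one_smult_mat)
  then show ?case unfolding pauli_group_0 pauli_phases_def by auto
next
  case (Suc n)
  have "pauli_I \<in> pauli_basis" "pauli_I = 1\<^sub>m 2" by (simp_all add: pauli_basis_def paulis_mat2 one_mat2)
  then show ?case using pauli_group_SucI[OF _ Suc.IH, of pauli_I] kron_one[of "2^n"] by simp
qed

lemma kron_one_pauli_group: "a \<in> pauli_basis \<Longrightarrow> kron a (1\<^sub>m (2^n)) \<in> pauli_group (Suc n)"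
  using pauli_group_SucI pauli_group_one by blast

lemma finite_pauli_group: "finite (pauli_group n)"
proof (induction n)
  case 0
  have "pauli_group 0 = (\<lambda>w. w \<cdot>\<^sub>m 1\<^sub>m 1) ` pauli_phases" unfolding pauli_group_0 by auto
  then show ?case unfolding pauli_phases_def by simp
next
  case (Suc n)
  have "pauli_group (Suc n) \<subseteq> (\<lambda>(a, Q). kron a Q) ` (pauli_basis \<times> pauli_group n)"
    by (auto elim!: pauli_group_SucE)
  moreover have "finite pauli_basis" unfolding pauli_basis_def by simp
  ultimately show ?case using Suc.IH finite_subset by blast
qed

lemma pauli_group_mult: "P \<in> pauli_group n \<Longrightarrow> Q \<in> pauli_group n \<Longrightarrow> P * Q \<in> pauli_group n"
proof (induction n arbitrary: P Q)
  case 0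
  then obtain w v where "P = w \<cdot>\<^sub>m 1\<^sub>m 1" "Q = v \<cdot>\<^sub>m 1\<^sub>m 1" "w \<in> pauli_phases" "v \<in> pauli_phases"
    unfolding pauli_group_0 by blast
  moreover have "(w \<cdot>\<^sub>m 1\<^sub>m 1) * (v \<cdot>\<^sub>m 1\<^sub>m 1) = (w * v) \<cdot>\<^sub>m (1\<^sub>m 1 :: complex mat)" for w v
    by (rule eq_matI) (auto simp: scalar_prod_def)
  ultimately show ?case unfolding pauli_group_0 using pauli_phases_mult by blast
next
  case (Suc n)
  obtain a P' where P: "P = kron a P'" "a \<in> pauli_basis" "P' \<in> pauli_group n"
    using Suc.prems(1) by (rule pauli_group_SucE)
  obtain b Q' where Q: "Q = kron b Q'" "b \<in> pauli_basis" "Q' \<in> pauli_group n"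
    using Suc.prems(2) by (rule pauli_group_SucE)
  obtain w c where wc: "w \<in> pauli_phases" "c \<in> pauli_basis" "a * b = w \<cdot>\<^sub>m c"
    using pauli_basis_mult[OF P(2) Q(2)] by blast
  have cc: "a \<in> carrier_mat 2 2" "b \<in> carrier_mat 2 2" "c \<in> carrier_mat 2 2"
    "P' \<in> carrier_mat (2^n) (2^n)" "Q' \<in> carrier_mat (2^n) (2^n)"
    using P Q wc by (auto simp: pauli_basis_carrier pauli_group_carrier)
  have "P * Q = kron (w \<cdot>\<^sub>m c) (P' * Q')" using kron_mult[OF cc(1,2,4,5)] P Q wc by simp
  also have "\<dots> = kron c (w \<cdot>\<^sub>m (P' * Q'))"
    using kron_smult_left[OF cc(3), of "P' * Q'" "2^n"] kron_smult_right[OF cc(3), of "P' * Q'" "2^n"] cc by simp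
  finally show ?case using Suc.IH[OF P(3) Q(3)] pauli_group_smult wc pauli_group_SucI by metis
qed

lemma pauli_group_adj: "P \<in> pauli_group n \<Longrightarrow> adj P \<in> pauli_group n"
proof (induction n arbitrary: P)
  case 0
  then obtain w where "P = w \<cdot>\<^sub>m 1\<^sub>m 1" "w \<in> pauli_phases" unfolding pauli_group_0 by blast
  then show ?case unfolding pauli_group_0 using pauli_phases_cnj by (auto simp: adj_smult)
next
  case (Suc n)
  obtain a P' where P: "P = kron a P'" "a \<in> pauli_basis" "P' \<in> pauli_group n"
    using Suc.prems by (rule pauli_group_SucE)
  have "adj P = kron a (adj P')"
    using P adj_kron[OF pauli_basis_carrier[OF P(2)] pauli_group_carrier[OF P(3)]] pauli_basis_adj by simp
  then show ?case using Suc.IH[OF P(3)] P pauli_group_SucI by simp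
qed

lemma pauli_group_adj_cases: "P \<in> pauli_group n \<Longrightarrow> adj P = P \<or> adj P = (-1) \<cdot>\<^sub>m P"
proof (induction n arbitrary: P)
  case 0
  then obtain w where P: "P = w \<cdot>\<^sub>m 1\<^sub>m 1" "w \<in> pauli_phases" unfolding pauli_group_0 by blast
  then show ?case using pauli_phases_cnj_cases[OF P(2)] by (auto simp: adj_smult intro!: eq_matI)
next
  case (Suc n)
  obtain a P' where P: "P = kron a P'" "a \<in> pauli_basis" "P' \<in> pauli_group n"
    using Suc.prems by (rule pauli_group_SucE)
  have cc: "a \<in> carrier_mat 2 2" "P' \<in> carrier_mat (2^n) (2^n)"
    using P by (auto simp: pauli_basis_carrier pauli_group_carrier)
  have "adj P = kron a (adj P')" using P adj_kron[OF cc] pauli_basis_adj by simp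
  then show ?case using Suc.IH[OF P(3)] kron_smult_right[OF cc] P(1) by auto
qed

lemma pauli_group_mult_adj: "P \<in> pauli_group n \<Longrightarrow> P * adj P = 1\<^sub>m (2^n)"
proof (induction n arbitrary: P)
  case 0
  then obtain w where "P = w \<cdot>\<^sub>m 1\<^sub>m 1" "w \<in> pauli_phases" unfolding pauli_group_0 by blast
  then show ?case using pauli_phases_mult_cnj by (auto simp: adj_smult scalar_prod_def intro!: eq_matI)
next
  case (Suc n)
  obtain a P' where P: "P = kron a P'" "a \<in> pauli_basis" "P' \<in> pauli_group n"
    using Suc.prems by (rule pauli_group_SucE)
  have cc: "a \<in> carrier_mat 2 2" "P' \<in> carrier_mat (2^n) (2^n)"
    using P by (auto simp: pauli_basis_carrier pauli_group_carrier)
  have "P * adj P = kron (a * a) (P' * adj P')"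
    using P adj_kron[OF cc] pauli_basis_adj kron_mult[OF cc(1) cc(1) cc(2) adj_carrier_mat[OF cc(2)]] by simp
  then show ?case using Suc.IH[OF P(3)] pauli_basis_mult_self[OF P(2)] kron_one by simp
qed

lemma pauli_group_unitary: "P \<in> pauli_group n \<Longrightarrow> unitary_mat (2^n) P"
  using pauli_group_carrier pauli_group_mult_adj pauli_group_mult_adj[OF pauli_group_adj]
  by (fastforce simp: unitary_mat_def)

lemma pauli_group_conj:
  "P \<in> pauli_group n \<Longrightarrow> Q \<in> pauli_group n \<Longrightarrow> P * Q * adj P = Q \<or> P * Q * adj P = (-1) \<cdot>\<^sub>m Q"
proof (induction n arbitrary: P Q)
  case 0
  then obtain w v where "P = w \<cdot>\<^sub>m 1\<^sub>m 1" "Q = v \<cdot>\<^sub>m 1\<^sub>m 1" "w \<in> pauli_phases" "v \<in> pauli_phases"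
    unfolding pauli_group_0 by blast
  moreover have "w * v * cnj w = v" if "w \<in> pauli_phases" for w v
    using pauli_phases_mult_cnj[OF that] by (simp add: algebra_simps)
  ultimately show ?case by (auto simp: adj_smult scalar_prod_def intro!: eq_matI)
next
  case (Suc n)
  obtain a P' where P: "P = kron a P'" "a \<in> pauli_basis" "P' \<in> pauli_group n"
    using Suc.prems(1) by (rule pauli_group_SucE)
  obtain b Q' where Q: "Q = kron b Q'" "b \<in> pauli_basis" "Q' \<in> pauli_group n"
    using Suc.prems(2) by (rule pauli_group_SucE)
  have cc: "a \<in> carrier_mat 2 2" "b \<in> carrier_mat 2 2"
    "P' \<in> carrier_mat (2^n) (2^n)" "Q' \<in> carrier_mat (2^n) (2^n)"
    using P Q by (auto simp: pauli_basis_carrier pauli_group_carrier)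
  have PQP: "P * Q * adj P = kron (a * b * adj a) (P' * Q' * adj P')"
    using P Q adj_kron[OF cc(1,3)] kron_mult[OF cc(1,2,3,4)]
      kron_mult[OF mult_carrier_mat[OF cc(1,2)] adj_carrier_mat[OF cc(1)]
        mult_carrier_mat[OF cc(3,4)] adj_carrier_mat[OF cc(3)]]
    by simp
  have scale: "kron (s \<cdot>\<^sub>m b) (t \<cdot>\<^sub>m Q') = (s * t) \<cdot>\<^sub>m Q" for s t
  proof -
    have "kron (s \<cdot>\<^sub>m b) (t \<cdot>\<^sub>m Q') = s \<cdot>\<^sub>m (t \<cdot>\<^sub>m Q)"
      using kron_smult_left[OF cc(2), of "t \<cdot>\<^sub>m Q'" "2^n"] kron_smult_right[OF cc(2,4)] cc(4) Q(1) by simp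
    also have "\<dots> = (s * t) \<cdot>\<^sub>m Q" by (auto intro!: eq_matI)
    finally show ?thesis .
  qed
  obtain s where s: "s = 1 \<or> s = -1" "a * b * adj a = s \<cdot>\<^sub>m b"
    using pauli_basis_conj[OF P(2) Q(2)] one_smult_mat by metis
  obtain t where t: "t = 1 \<or> t = -1" "P' * Q' * adj P' = t \<cdot>\<^sub>m Q'"
    using Suc.IH[OF P(3) Q(3)] one_smult_mat by metis
  have "P * Q * adj P = (s * t) \<cdot>\<^sub>m Q" using PQP s(2) t(2) scale by simp
  then show ?case using s(1) t(1) one_smult_mat by auto
qed

section \<open>Closure properties of the Clifford hierarchy\<close>

lemma clifford_level_2:
  "clifford_level n 2 = {U. unitary_mat (2^n) U \<and> (\<forall>P \<in> pauli_group n. U * P * adj U \<in> pauli_group n)}"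
  by (simp add: numeral_2_eq_2)

lemma clifford_level_unitary: "W \<in> clifford_level n (Suc k) \<Longrightarrow> unitary_mat (2^n) W"
  by (cases k) (auto simp: pauli_group_unitary)

lemma clifford_level_carrier: "W \<in> clifford_level n (Suc k) \<Longrightarrow> W \<in> carrier_mat (2^n) (2^n)"
  using clifford_level_unitary unitary_mat_carrier by blast

lemma pauli_group_in_clifford_level_2: "P \<in> pauli_group n \<Longrightarrow> P \<in> clifford_level n 2"
  unfolding clifford_level_2 using pauli_group_unitary pauli_group_conj pauli_group_uminus by fastforce

lemma clifford_level_Suc_mono: "clifford_level n (Suc k) \<subseteq> clifford_level n (Suc (Suc k))"
proof -
  have "W \<in> clifford_level n (Suc (Suc k))" if "W \<in> clifford_level n (Suc k)" for W
    using that
  proof (induction k arbitrary: W)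
    case 0
    then show ?case using pauli_group_in_clifford_level_2[of W n] by (simp add: numeral_2_eq_2)
  next
    case (Suc k)
    then show ?case by auto
  qed
  then show ?thesis by blast
qed

lemma clifford_level_mono: "j \<le> k \<Longrightarrow> clifford_level n (Suc j) \<subseteq> clifford_level n (Suc k)"
  using lift_Suc_mono_le[of "\<lambda>k. clifford_level n (Suc k)"] clifford_level_Suc_mono by blast

lemma clifford_level_2_mult:
  assumes A: "A \<in> clifford_level n 2" and B: "B \<in> clifford_level n 2"
  shows "A * B \<in> clifford_level n 2"
proof -
  let ?N = "2^n::nat"
  have u: "unitary_mat ?N A" "unitary_mat ?N B" using A B unfolding clifford_level_2 by auto
  have c: "A \<in> carrier_mat ?N ?N" "B \<in> carrier_mat ?N ?N" "adj A \<in> carrier_mat ?N ?N" "adj B \<in> carrier_mat ?N ?N"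
    using u unitary_mat_carrier unitary_mat_adj by blast+
  have "A * B * P * adj (A * B) \<in> pauli_group n" if P: "P \<in> pauli_group n" for P
  proof -
    have "A * B * P * adj (A * B) = A * (B * P * adj B) * adj A"
      using c pauli_group_carrier[OF P] by (simp add: adj_mult[OF c(1,2)] assoc_mult_square)
    moreover have "B * P * adj B \<in> pauli_group n" using B P unfolding clifford_level_2 by blast
    ultimately show ?thesis using A unfolding clifford_level_2 by auto
  qed
  then show ?thesis unfolding clifford_level_2 using unitary_mat_mult[OF u] by blast
qed

text \<open>Conjugation by a Clifford unitary is injective on the finite Pauli group, hence onto it;
  so conjugation by its adjoint also maps Paulis to Paulis.\<close>

lemma clifford_level_2_adj:
  assumes U: "U \<in> clifford_level n 2"
  shows "adj U \<in> clifford_level n 2"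
proof -
  let ?N = "2^n::nat" and ?f = "\<lambda>P. U * P * adj U"
  have u: "unitary_mat ?N U" using U unfolding clifford_level_2 by blast
  have c: "U \<in> carrier_mat ?N ?N" "adj U \<in> carrier_mat ?N ?N"
    using u unitary_mat_carrier unitary_mat_adj by blast+
  have uu: "U * adj U = 1\<^sub>m ?N" "adj U * U = 1\<^sub>m ?N" using u unfolding unitary_mat_def by auto
  have undo: "adj U * ?f P * U = P" if "P \<in> carrier_mat ?N ?N" for P
  proof -
    have "adj U * ?f P * U = (adj U * U) * P * (adj U * U)"
      using c that by (simp add: assoc_mult_square)
    then show ?thesis using uu that by simp
  qed
  have "inj_on ?f (pauli_group n)"
    by (rule inj_on_inverseI[where g = "\<lambda>P. adj U * P * U"]) (use undo pauli_group_carrier in blast)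
  moreover have "?f ` pauli_group n \<subseteq> pauli_group n" using U unfolding clifford_level_2 by blast
  ultimately have onto: "?f ` pauli_group n = pauli_group n"
    by (rule endo_inj_surj[OF finite_pauli_group, rotated])
  have "adj U * P * adj (adj U) \<in> pauli_group n" if P: "P \<in> pauli_group n" for P
  proof -
    obtain Q where Q: "Q \<in> pauli_group n" "P = ?f Q" using P onto by blast
    then show ?thesis using undo[OF pauli_group_carrier[OF Q(1)]] by simp
  qed
  then show ?thesis unfolding clifford_level_2 using unitary_mat_adj[OF u] by blast
qed

lemma clifford_conj_clifford_level:
  "G \<in> clifford_level n 2 \<Longrightarrow> W \<in> clifford_level n (Suc k) \<Longrightarrow> G * W * adj G \<in> clifford_level n (Suc k)"
proof (induction k arbitrary: W)
  case 0
  then show ?case unfolding clifford_level_2 by simp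
next
  case (Suc k)
  let ?N = "2^n::nat"
  have uG: "unitary_mat ?N G" using Suc.prems(1) unfolding clifford_level_2 by auto
  have uW: "unitary_mat ?N W" using Suc.prems(2) clifford_level_unitary by blast
  have c: "G \<in> carrier_mat ?N ?N" "W \<in> carrier_mat ?N ?N" "adj G \<in> carrier_mat ?N ?N" "adj W \<in> carrier_mat ?N ?N"
    using uG uW unitary_mat_carrier unitary_mat_adj by blast+
  have "G * W * adj G * P * adj (G * W * adj G) \<in> clifford_level n (Suc k)" if P: "P \<in> pauli_group n" for P
  proof -
    have "adj (G * W * adj G) = adj (adj G) * adj (G * W)"
      by (rule adj_mult[OF mult_carrier_mat[OF c(1,2)] c(3)])
    also have "\<dots> = G * adj W * adj G"
      using c by (simp add: adj_mult[OF c(1,2)] assoc_mult_square)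
    finally have "G * W * adj G * P * adj (G * W * adj G) = G * (W * (adj G * P * adj (adj G)) * adj W) * adj G"
      using c pauli_group_carrier[OF P] by (simp add: assoc_mult_square)
    moreover have "adj G * P * adj (adj G) \<in> pauli_group n"
      using clifford_level_2_adj[OF Suc.prems(1)] P unfolding clifford_level_2 by auto
    then have "W * (adj G * P * adj (adj G)) * adj W \<in> clifford_level n (Suc k)"
      using Suc.prems(2) by auto
    ultimately show ?thesis using Suc.IH[OF Suc.prems(1)] by simp
  qed
  moreover have "unitary_mat ?N (G * W * adj G)" using uG uW unitary_mat_mult unitary_mat_adj by blast
  ultimately show ?case by simp
qed

lemma clifford_level_mult_clifford_right:
  assumes G: "G \<in> clifford_level n 2" and W: "W \<in> clifford_level n (Suc (Suc k))"
  shows "W * G \<in> clifford_level n (Suc (Suc k))"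
proof -
  let ?N = "2^n::nat"
  have uG: "unitary_mat ?N G" using G unfolding clifford_level_2 by auto
  have uW: "unitary_mat ?N W" using W clifford_level_unitary by blast
  have c: "G \<in> carrier_mat ?N ?N" "W \<in> carrier_mat ?N ?N" "adj G \<in> carrier_mat ?N ?N" "adj W \<in> carrier_mat ?N ?N"
    using uG uW unitary_mat_carrier unitary_mat_adj by blast+
  have "W * G * P * adj (W * G) \<in> clifford_level n (Suc k)" if P: "P \<in> pauli_group n" for P
  proof -
    have "W * G * P * adj (W * G) = W * (G * P * adj G) * adj W"
      using c pauli_group_carrier[OF P] by (simp add: adj_mult[OF c(2,1)] assoc_mult_square)
    moreover have "G * P * adj G \<in> pauli_group n" using G P unfolding clifford_level_2 by auto
    ultimately show ?thesis using W by auto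
  qed
  then show ?thesis using unitary_mat_mult[OF uW uG] by simp
qed

lemma clifford_level_mult_clifford_left:
  assumes G: "G \<in> clifford_level n 2" and W: "W \<in> clifford_level n (Suc (Suc k))"
  shows "G * W \<in> clifford_level n (Suc (Suc k))"
proof -
  let ?N = "2^n::nat"
  have uG: "unitary_mat ?N G" using G unfolding clifford_level_2 by auto
  have c: "G \<in> carrier_mat ?N ?N" "W \<in> carrier_mat ?N ?N" "adj G \<in> carrier_mat ?N ?N"
    using uG W clifford_level_carrier unitary_mat_carrier unitary_mat_adj by blast+
  have "G * W = (G * W * adj G) * G"
    using c uG by (simp add: assoc_mult_square unitary_mat_def)
  then show ?thesis
    using clifford_level_mult_clifford_right[OF G clifford_conj_clifford_level[OF G W]] by simp
qed

lemma clifford_level_mult_pauli_right: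
  assumes P: "P \<in> pauli_group n" and W: "W \<in> clifford_level n (Suc k)"
  shows "W * P \<in> clifford_level n (Suc k)"
proof (cases k)
  case 0
  then show ?thesis using pauli_group_mult P W by simp
next
  case (Suc j)
  then show ?thesis
    using clifford_level_mult_clifford_right[OF pauli_group_in_clifford_level_2[OF P], of W j] W by simp
qed

lemma clifford_level_mult_pauli_left:
  assumes P: "P \<in> pauli_group n" and W: "W \<in> clifford_level n (Suc k)"
  shows "P * W \<in> clifford_level n (Suc k)"
proof (cases k)
  case 0
  then show ?thesis using pauli_group_mult P W by simp
next
  case (Suc j)
  then show ?thesis
    using clifford_level_mult_clifford_left[OF pauli_group_in_clifford_level_2[OF P], of W j] W by simp
qed

section \<open>Block matrices and controlled unitaries\<close>

definition block_diag :: "nat \<Rightarrow> complex mat \<Rightarrow> complex mat \<Rightarrow> complex mat" where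
  "block_diag N A B = four_block_mat A (0\<^sub>m N N) (0\<^sub>m N N) B"

definition block_antidiag :: "nat \<Rightarrow> complex mat \<Rightarrow> complex mat \<Rightarrow> complex mat" where
  "block_antidiag N A B = four_block_mat (0\<^sub>m N N) A B (0\<^sub>m N N)"

lemma block_diag_carrier:
  "A \<in> carrier_mat N N \<Longrightarrow> B \<in> carrier_mat N N \<Longrightarrow> block_diag N A B \<in> carrier_mat (N + N) (N + N)"
  by (simp add: block_diag_def)

context
  fixes N :: nat and A B C D :: "complex mat"
  assumes carrier: "A \<in> carrier_mat N N" "B \<in> carrier_mat N N" "C \<in> carrier_mat N N" "D \<in> carrier_mat N N"
begin

lemma block_mult:
  "block_diag N A B * block_diag N C D = block_diag N (A * C) (B * D)"
  "block_antidiag N A B * block_diag N C D = block_antidiag N (A * D) (B * C)"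
  "block_diag N A B * block_antidiag N C D = block_antidiag N (A * C) (B * D)"
  "block_antidiag N A B * block_antidiag N C D = block_diag N (A * D) (B * C)"
  unfolding block_diag_def block_antidiag_def
  by (subst mult_four_block_mat[of _ N N _ N _ N _ _ N _ N]; use carrier in simp)+

lemma block_diag_eqD: "block_diag N A B = block_diag N C D \<Longrightarrow> B = D"
proof (rule eq_matI)
  fix i j assume "block_diag N A B = block_diag N C D" and "i < dim_row D" "j < dim_col D"
  then have "i < N" "j < N" "block_diag N A B $$ (N + i, N + j) = block_diag N C D $$ (N + i, N + j)"
    using carrier by auto
  then show "B $$ (i, j) = D $$ (i, j)" unfolding block_diag_def using carrier by simp
qed (use carrier in auto)

lemma block_antidiag_eq_block_diagD: "block_antidiag N C D = block_diag N A B \<Longrightarrow> B = 0\<^sub>m N N"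
proof (rule eq_matI)
  fix i j assume "block_antidiag N C D = block_diag N A B" and "i < dim_row (0\<^sub>m N N :: complex mat)"
    "j < dim_col (0\<^sub>m N N :: complex mat)"
  then have "i < N" "j < N" "block_antidiag N C D $$ (N + i, N + j) = block_diag N A B $$ (N + i, N + j)"
    by auto
  then show "B $$ (i, j) = 0\<^sub>m N N $$ (i, j)" unfolding block_diag_def block_antidiag_def using carrier by simp
qed (use carrier in auto)

end

lemma adj_block_diag:
  "A \<in> carrier_mat N N \<Longrightarrow> B \<in> carrier_mat N N \<Longrightarrow> adj (block_diag N A B) = block_diag N (adj A) (adj B)"
  unfolding block_diag_def by (subst adj_four_block_mat) auto

lemma block_diag_one: "block_diag N (1\<^sub>m N) (1\<^sub>m N) = 1\<^sub>m (N + N)"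
  unfolding block_diag_def by simp

lemma unitary_block_diag:
  assumes A: "unitary_mat N A" and B: "unitary_mat N B"
  shows "unitary_mat (N + N) (block_diag N A B)"
proof -
  have c: "A \<in> carrier_mat N N" "B \<in> carrier_mat N N" "adj A \<in> carrier_mat N N" "adj B \<in> carrier_mat N N"
    using A B unitary_mat_carrier unitary_mat_adj by blast+
  then show ?thesis
    using A B block_diag_carrier[OF c(1,2)]
    by (simp add: unitary_mat_def adj_block_diag block_mult block_diag_one)
qed

lemma controlled_eq_block_diag:
  "U \<in> carrier_mat (2^n) (2^n) \<Longrightarrow> controlled n U = block_diag (2^n) (1\<^sub>m (2^n)) U"
  unfolding controlled_def block_diag_def projectors_mat2
  by (subst kron_mat2[where N = "2^n"], simp)+ (auto intro!: eq_matI)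

lemma kron_pauli_blocks:
  assumes "Q \<in> carrier_mat N N"
  shows "kron pauli_I Q = block_diag N Q Q"
    and "kron pauli_Z Q = block_diag N Q ((-1) \<cdot>\<^sub>m Q)"
    and "kron pauli_X Q = block_antidiag N Q Q"
    and "kron pauli_Y Q = block_antidiag N ((-\<i>) \<cdot>\<^sub>m Q) (\<i> \<cdot>\<^sub>m Q)"
  unfolding paulis_mat2 block_diag_def block_antidiag_def using assms
  by (subst kron_mat2[where N = N], simp, (auto intro!: eq_matI))+

lemma block_diag_pauli_group:
  assumes "Q \<in> pauli_group n" and "R = Q \<or> R = (-1) \<cdot>\<^sub>m Q"
  shows "block_diag (2^n) Q R \<in> pauli_group (Suc n)"
  using assms kron_pauli_blocks[OF pauli_group_carrier[OF assms(1)]] pauli_group_SucI[OF _ assms(1)]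
  by (metis insertI1 insertI2 pauli_basis_def)

lemma pauli_group_block_diag_lower:
  assumes P: "block_diag (2^n) B A \<in> pauli_group (Suc n)" and A: "unitary_mat (2^n) A"
    and B: "B \<in> carrier_mat (2^n) (2^n)"
  shows "A \<in> pauli_group n"
proof -
  let ?N = "2^n::nat"
  have cA: "A \<in> carrier_mat ?N ?N" using A unitary_mat_carrier by blast
  obtain a Q where aQ: "block_diag ?N B A = kron a Q" "a \<in> pauli_basis" "Q \<in> pauli_group n"
    using P by (rule pauli_group_SucE)
  have cQ: "Q \<in> carrier_mat ?N ?N" "(-1) \<cdot>\<^sub>m Q \<in> carrier_mat ?N ?N"
    "(-\<i>) \<cdot>\<^sub>m Q \<in> carrier_mat ?N ?N" "\<i> \<cdot>\<^sub>m Q \<in> carrier_mat ?N ?N"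
    using pauli_group_carrier[OF aQ(3)] by auto
  have "A \<noteq> 0\<^sub>m ?N ?N"
  proof
    assume "A = 0\<^sub>m ?N ?N"
    then have "(1\<^sub>m ?N :: complex mat) = 0\<^sub>m ?N ?N" using A by (simp add: unitary_mat_def)
    then have "(1\<^sub>m ?N :: complex mat) $$ (0, 0) = 0\<^sub>m ?N ?N $$ (0, 0)" by simp
    then show False by simp
  qed
  then have antidiag: "block_antidiag ?N C D \<noteq> block_diag ?N B A"
    if "C \<in> carrier_mat ?N ?N" "D \<in> carrier_mat ?N ?N" for C D
    using block_antidiag_eq_block_diagD[OF B cA that] by blast
  from aQ(2) consider "a = pauli_I" | "a = pauli_Z" | "a = pauli_X" | "a = pauli_Y"
    unfolding pauli_basis_def by blast
  then show ?thesis
  proof cases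
    case 1
    then have "A = Q" using aQ(1) kron_pauli_blocks(1)[OF cQ(1)] block_diag_eqD[OF B cA cQ(1,1)] by simp
    then show ?thesis using aQ(3) by simp
  next
    case 2
    then have "A = (-1) \<cdot>\<^sub>m Q" using aQ(1) kron_pauli_blocks(2)[OF cQ(1)] block_diag_eqD[OF B cA cQ(1,2)] by simp
    then show ?thesis using pauli_group_uminus[OF aQ(3)] by simp
  next
    case 3
    then show ?thesis using aQ(1) kron_pauli_blocks(3)[OF cQ(1)] antidiag[OF cQ(1,1)] by simp
  next
    case 4
    then show ?thesis using aQ(1) kron_pauli_blocks(4)[OF cQ(1)] antidiag[OF cQ(3,4)] by simp
  qed
qed

lemma controlled_mult:
  assumes "A \<in> carrier_mat (2^n) (2^n)" "B \<in> carrier_mat (2^n) (2^n)"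
  shows "controlled n A * controlled n B = controlled n (A * B)"
  using assms by (simp add: controlled_eq_block_diag block_mult)

lemma controlled_one: "controlled n (1\<^sub>m (2^n)) = 1\<^sub>m (2^(n+1))"
  by (simp add: controlled_eq_block_diag block_diag_one mult_2)

section \<open>Upper bound on the level of a controlled Clifford\<close>

lemma controlled_conj_kron:
  assumes U: "unitary_mat N U" and Q: "Q \<in> carrier_mat N N" and a: "a \<in> pauli_basis"
  shows "block_diag N (1\<^sub>m N) U * kron a Q * adj (block_diag N (1\<^sub>m N) U)
           = kron a (1\<^sub>m N) * block_diag N Q (U * Q * adj U)
       \<or> block_diag N (1\<^sub>m N) U * kron a Q * adj (block_diag N (1\<^sub>m N) U)
           = kron a (1\<^sub>m N) * (block_diag N U (adj U) * block_diag N Q (U * Q * adj U))"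
proof -
  have cU: "U \<in> carrier_mat N N" "adj U \<in> carrier_mat N N"
    using U unitary_mat_carrier unitary_mat_adj by blast+
  have adjC: "adj (block_diag N (1\<^sub>m N) U) = block_diag N (1\<^sub>m N) (adj U)"
    using adj_block_diag[OF one_carrier_mat cU(1)] by simp
  have cancel: "adj U * (U * (Q * adj U)) = Q * adj U"
  proof -
    have "adj U * (U * (Q * adj U)) = (adj U * U) * Q * adj U" using cU Q by (simp add: assoc_mult_square)
    also have "\<dots> = Q * adj U" using U Q cU by (simp add: unitary_mat_def)
    finally show ?thesis .
  qed
  note blocks = kron_pauli_blocks[OF Q] kron_pauli_blocks[OF one_carrier_mat]
  note smult_dim = mult_smult_assoc_dim mult_smult_distrib_dim
  from a consider "a = pauli_I" | "a = pauli_Z" | "a = pauli_X" | "a = pauli_Y"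
    unfolding pauli_basis_def by blast
  then show ?thesis
  proof cases
    case 1
    show ?thesis unfolding \<open>a = pauli_I\<close> adjC blocks using Q cU by (simp add: block_mult)
  next
    case 2
    show ?thesis unfolding \<open>a = pauli_Z\<close> adjC blocks using Q cU by (simp add: block_mult smult_dim)
  next
    case 3
    show ?thesis unfolding \<open>a = pauli_X\<close> adjC blocks using Q cU by (simp add: block_mult cancel)
  next
    case 4
    show ?thesis unfolding \<open>a = pauli_Y\<close> adjC blocks using Q cU by (simp add: block_mult cancel smult_dim)
  qed
qed

lemma controlled_in_clifford_level:
  assumes U: "unitary_mat (2^n) U"
    and diag: "\<And>Q. Q \<in> pauli_group n \<Longrightarrow>
      block_diag (2^n) Q (U * Q * adj U) \<in> clifford_level (Suc n) (Suc k)"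
    and twisted: "\<And>Q. Q \<in> pauli_group n \<Longrightarrow>
      block_diag (2^n) U (adj U) * block_diag (2^n) Q (U * Q * adj U) \<in> clifford_level (Suc n) (Suc k)"
  shows "block_diag (2^n) (1\<^sub>m (2^n)) U \<in> clifford_level (Suc n) (Suc (Suc k))"
proof -
  let ?C = "block_diag (2^n) (1\<^sub>m (2^n)) U"
  have "?C * P * adj ?C \<in> clifford_level (Suc n) (Suc k)" if P: "P \<in> pauli_group (Suc n)" for P
  proof -
    obtain a Q where P_eq: "P = kron a Q" and a: "a \<in> pauli_basis" and Q: "Q \<in> pauli_group n"
      using P by (rule pauli_group_SucE)
    have left: "kron a (1\<^sub>m (2^n)) * W \<in> clifford_level (Suc n) (Suc k)"
      if "W \<in> clifford_level (Suc n) (Suc k)" for W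
      using clifford_level_mult_pauli_left[OF kron_one_pauli_group[OF a] that] .
    from controlled_conj_kron[OF U pauli_group_carrier[OF Q] a] show ?thesis
      unfolding P_eq using left[OF diag[OF Q]] left[OF twisted[OF Q]] by auto
  qed
  moreover have "unitary_mat (2^n) (1\<^sub>m (2^n))" by (simp add: unitary_mat_def)
  then have "unitary_mat (2^Suc n) ?C" using unitary_block_diag[OF _ U] by (simp add: mult_2)
  ultimately show ?thesis by (simp only: clifford_level.simps) blast
qed

lemma controlled_pauli_in_clifford_level_2:
  assumes U: "U \<in> pauli_group n"
  shows "block_diag (2^n) (1\<^sub>m (2^n)) U \<in> clifford_level (Suc n) 2"
proof -
  have diag: "block_diag (2^n) Q (U * Q * adj U) \<in> pauli_group (Suc n)" if "Q \<in> pauli_group n" for Q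
    using block_diag_pauli_group[OF that pauli_group_conj[OF U that]] .
  have "block_diag (2^n) U (adj U) \<in> pauli_group (Suc n)"
    using block_diag_pauli_group[OF U] pauli_group_adj_cases[OF U] by blast
  then have "block_diag (2^n) (1\<^sub>m (2^n)) U \<in> clifford_level (Suc n) (Suc (Suc 0))"
    by (intro controlled_in_clifford_level) (auto simp: pauli_group_unitary[OF U] diag pauli_group_mult)
  then show ?thesis by (simp add: numeral_2_eq_2)
qed

lemma kron_pauli_I_in_clifford_level_2:
  assumes U: "U \<in> clifford_level n 2"
  shows "kron pauli_I U \<in> clifford_level (Suc n) 2"
proof -
  let ?N = "2^n::nat"
  have uU: "unitary_mat ?N U" using U unfolding clifford_level_2 by blast
  have cU: "U \<in> carrier_mat ?N ?N" "adj U \<in> carrier_mat ?N ?N"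
    using uU unitary_mat_carrier unitary_mat_adj by blast+
  have I: "pauli_I \<in> pauli_basis" "pauli_I \<in> carrier_mat 2 2"
    by (simp_all add: pauli_basis_def pauli_basis_carrier)
  have adjK: "adj (kron pauli_I U) = kron pauli_I (adj U)"
    using adj_kron[OF I(2) cU(1)] pauli_basis_adj[OF I(1)] by simp
  have "unitary_mat (2 * ?N) (kron pauli_I U)"
    using uU kron_carrier_mat[OF I(2) cU(1)] pauli_basis_mult_self[OF I(1)] kron_one[of ?N]
    by (simp add: unitary_mat_def adjK kron_mult[OF I(2) I(2) cU(1,2)] kron_mult[OF I(2) I(2) cU(2,1)])
  moreover have "kron pauli_I U * P * adj (kron pauli_I U) \<in> pauli_group (Suc n)"
    if P: "P \<in> pauli_group (Suc n)" for P
  proof -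
    obtain b Q where bQ: "P = kron b Q" "b \<in> pauli_basis" "Q \<in> pauli_group n"
      using P by (rule pauli_group_SucE)
    have cb: "b \<in> carrier_mat 2 2" and cQ: "Q \<in> carrier_mat ?N ?N"
      using pauli_basis_carrier[OF bQ(2)] pauli_group_carrier[OF bQ(3)] .
    have "kron pauli_I U * P * adj (kron pauli_I U) = kron (pauli_I * b * pauli_I) (U * Q * adj U)"
      unfolding adjK bQ(1) kron_mult[OF I(2) cb cU(1) cQ]
      by (rule kron_mult) (use I cb cU cQ in auto)
    also have "\<dots> = kron b (U * Q * adj U)"
      using cb by (simp add: paulis_mat2 flip: one_mat2)
    finally show ?thesis using pauli_group_SucI[OF bQ(2)] U bQ(3) unfolding clifford_level_2 by auto
  qed
  ultimately show ?thesis unfolding clifford_level_2 by simp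
qed

lemma block_diag_pauli_in_clifford_level_2:
  assumes Q: "Q \<in> pauli_group n" and R: "R \<in> pauli_group n"
  shows "block_diag (2^n) Q R \<in> clifford_level (Suc n) 2"
proof -
  let ?N = "2^n::nat"
  have c: "Q \<in> carrier_mat ?N ?N" "adj Q \<in> carrier_mat ?N ?N" "R \<in> carrier_mat ?N ?N"
    using Q R pauli_group_carrier pauli_group_adj by blast+
  have "Q * (adj Q * R) = (Q * adj Q) * R" using c by (simp add: assoc_mult_square)
  then have "block_diag ?N Q R = kron pauli_I Q * block_diag ?N (1\<^sub>m ?N) (adj Q * R)"
    unfolding kron_pauli_blocks(1)[OF c(1)] using c pauli_group_mult_adj[OF Q] by (simp add: block_mult)
  moreover have "kron pauli_I Q \<in> clifford_level (Suc n) 2"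
    using pauli_group_in_clifford_level_2[OF pauli_group_SucI[OF _ Q]] by (simp add: pauli_basis_def)
  moreover have "block_diag ?N (1\<^sub>m ?N) (adj Q * R) \<in> clifford_level (Suc n) 2"
    using controlled_pauli_in_clifford_level_2[OF pauli_group_mult[OF pauli_group_adj[OF Q] R]] .
  ultimately show ?thesis by (simp add: clifford_level_2_mult)
qed

lemma block_diag_adj_factor:
  assumes U: "unitary_mat N U"
  shows "block_diag N U (adj U) = block_diag N (1\<^sub>m N) (adj U * adj U) * kron pauli_I U"
proof -
  have c: "U \<in> carrier_mat N N" "adj U \<in> carrier_mat N N"
    using U unitary_mat_carrier unitary_mat_adj by blast+
  have "adj U * adj U * U = adj U * (adj U * U)" using c by (simp add: assoc_mult_square)
  then have "adj U * adj U * U = adj U" using U c by (simp add: unitary_mat_def)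
  then show ?thesis unfolding kron_pauli_blocks(1)[OF c(1)] using c by (simp add: block_mult)
qed

lemma controlled_in_clifford_level_of_pauli_power:
  "U \<in> clifford_level n 2 \<Longrightarrow> U ^\<^sub>m (2^m) \<in> pauli_group n
    \<Longrightarrow> block_diag (2^n) (1\<^sub>m (2^n)) U \<in> clifford_level (Suc n) (Suc (Suc m))"
proof (induction m arbitrary: U)
  case 0
  then have "U \<in> pauli_group n" using clifford_level_carrier[of U n 1] by (simp add: numeral_2_eq_2)
  then show ?case using controlled_pauli_in_clifford_level_2 by (simp add: numeral_2_eq_2)
next
  case (Suc m)
  let ?N = "2^n::nat" and ?V = "adj U * adj U"
  have uU: "unitary_mat ?N U" using Suc.prems(1) unfolding clifford_level_2 by blast
  have cU: "U \<in> carrier_mat ?N ?N" "adj U \<in> carrier_mat ?N ?N"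
    using uU unitary_mat_carrier unitary_mat_adj by blast+
  have V: "?V \<in> clifford_level n 2"
    using clifford_level_2_mult clifford_level_2_adj Suc.prems(1) by blast
  have "?V ^\<^sub>m (2^m) = adj (U ^\<^sub>m (2 ^ Suc m))"
    using pow_mat_mult_self[OF cU(2)] adj_pow_mat[OF cU(1)] by simp
  then have "block_diag ?N (1\<^sub>m ?N) ?V \<in> clifford_level (Suc n) (Suc (Suc m))"
    using Suc.IH[OF V] pauli_group_adj[OF Suc.prems(2)] by simp
  then have "block_diag ?N (1\<^sub>m ?N) ?V * kron pauli_I U \<in> clifford_level (Suc n) (Suc (Suc m))"
    by (rule clifford_level_mult_clifford_right[OF kron_pauli_I_in_clifford_level_2[OF Suc.prems(1)]])
  then have twist: "block_diag ?N U (adj U) \<in> clifford_level (Suc n) (Suc (Suc m))"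
    unfolding block_diag_adj_factor[OF uU] .
  have diag: "block_diag ?N Q (U * Q * adj U) \<in> clifford_level (Suc n) 2" if "Q \<in> pauli_group n" for Q
    using block_diag_pauli_in_clifford_level_2[OF that] Suc.prems(1) that unfolding clifford_level_2 by blast
  show ?case
  proof (rule controlled_in_clifford_level[OF uU])
    fix Q assume Q: "Q \<in> pauli_group n"
    show "block_diag ?N Q (U * Q * adj U) \<in> clifford_level (Suc n) (Suc (Suc m))"
      using diag[OF Q] clifford_level_mono[of 1 "Suc m" "Suc n"] by (auto simp: numeral_2_eq_2)
    show "block_diag ?N U (adj U) * block_diag ?N Q (U * Q * adj U) \<in> clifford_level (Suc n) (Suc (Suc m))"
      using clifford_level_mult_clifford_right[OF diag[OF Q] twist] .
  qed
qed

section \<open>Lower bound on the level of a controlled Clifford\<close>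

lemma commutator_pauli_X_block_diag:
  assumes A: "A \<in> carrier_mat N N" and B: "B \<in> carrier_mat N N"
  shows "block_diag N A B * kron pauli_X (1\<^sub>m N) * adj (block_diag N A B) * kron pauli_X (1\<^sub>m N)
    = block_diag N (A * adj B) (B * adj A)"
  using A B adj_carrier_mat[OF A] adj_carrier_mat[OF B]
  by (simp add: adj_block_diag kron_pauli_blocks(3)[OF one_carrier_mat] block_mult)

lemma clifford_level_commutator_pauli:
  assumes W: "W \<in> clifford_level n (Suc (Suc k))" and P: "P \<in> pauli_group n"
  shows "W * P * adj W * P \<in> clifford_level n (Suc k)"
  using clifford_level_mult_pauli_right[OF P] W P by simp

lemma pauli_power_of_block_diag_adj:
  assumes "unitary_mat (2^n) A" and "block_diag (2^n) (adj A) A \<in> clifford_level (Suc n) (Suc k)"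
  shows "A ^\<^sub>m (2^k) \<in> pauli_group n"
  using assms
proof (induction k arbitrary: A)
  case 0
  then show ?case
    using pauli_group_block_diag_lower[of n "adj A" A] unitary_mat_carrier[OF unitary_mat_adj] by simp
next
  case (Suc k)
  let ?N = "2^n::nat"
  have cA: "A \<in> carrier_mat ?N ?N" "adj A \<in> carrier_mat ?N ?N"
    using Suc.prems(1) unitary_mat_carrier unitary_mat_adj by blast+
  have "pauli_X \<in> pauli_basis" by (simp add: pauli_basis_def)
  then have "block_diag ?N (adj A * adj A) (A * A) \<in> clifford_level (Suc n) (Suc k)"
    using clifford_level_commutator_pauli[OF Suc.prems(2) kron_one_pauli_group[OF \<open>pauli_X \<in> _\<close>]]
      commutator_pauli_X_block_diag[OF cA(2,1)] by simp
  then have "(A * A) ^\<^sub>m (2^k) \<in> pauli_group n"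
    using Suc.IH[OF unitary_mat_mult[OF Suc.prems(1) Suc.prems(1)]] adj_mult[OF cA(1) cA(1)] by simp
  then show ?case using pow_mat_mult_self[OF cA(1)] by simp
qed

lemma pauli_power_of_controlled_in_clifford_level:
  assumes U: "unitary_mat (2^n) U"
    and C: "block_diag (2^n) (1\<^sub>m (2^n)) U \<in> clifford_level (Suc n) (Suc (Suc k))"
  shows "U ^\<^sub>m (2^k) \<in> pauli_group n"
proof -
  have "pauli_X \<in> pauli_basis" by (simp add: pauli_basis_def)
  then have "block_diag (2^n) (adj U) U \<in> clifford_level (Suc n) (Suc k)"
    using clifford_level_commutator_pauli[OF C kron_one_pauli_group[OF \<open>pauli_X \<in> _\<close>]]
      commutator_pauli_X_block_diag[OF one_carrier_mat unitary_mat_carrier[OF U]]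
      unitary_mat_carrier[OF U] adj_carrier_mat[OF unitary_mat_carrier[OF U]] by simp
  then show ?thesis using pauli_power_of_block_diag_adj[OF U] by blast
qed

lemma controlled_clifford_level_exact:
  assumes U: "U \<in> clifford_level n 2" and per: "pauli_periodicity n U m" and m: "m \<ge> 1"
  shows "controlled n U \<in> clifford_level (n+1) (m+2) - clifford_level (n+1) (m+1)"
proof -
  have uU: "unitary_mat (2^n) U" using U unfolding clifford_level_2 by blast
  obtain k where k: "m = Suc k" using m by (cases m) auto
  have "block_diag (2^n) (1\<^sub>m (2^n)) U \<in> clifford_level (Suc n) (Suc (Suc m))"
    using controlled_in_clifford_level_of_pauli_power[OF U] per unfolding pauli_periodicity_def by blast
  moreover have "block_diag (2^n) (1\<^sub>m (2^n)) U \<notin> clifford_level (Suc n) (Suc m)"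
    using pauli_power_of_controlled_in_clifford_level[OF uU, of k] per k
    unfolding pauli_periodicity_def by auto
  ultimately show ?thesis
    using controlled_eq_block_diag[OF unitary_mat_carrier[OF uU]] by simp
qed

lemma pauli_periodicity_adj:
  assumes "U \<in> carrier_mat (2^n) (2^n)"
  shows "pauli_periodicity n (adj U) m \<longleftrightarrow> pauli_periodicity n U m"
proof -
  have "adj U ^\<^sub>m k \<in> pauli_group n \<longleftrightarrow> U ^\<^sub>m k \<in> pauli_group n" for k
  proof -
    have "adj U ^\<^sub>m k = adj (U ^\<^sub>m k)" using adj_pow_mat[OF assms] by simp
    then show ?thesis using pauli_group_adj[of "U ^\<^sub>m k" n] pauli_group_adj[of "adj (U ^\<^sub>m k)" n] by auto
  qed
  then show ?thesis unfolding pauli_periodicity_def by simp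
qed

theorem mainTheorem3:
  fixes n m :: nat and U V :: "complex mat"
  assumes "n \<ge> 1"
    and "U \<in> clifford_level n 2"
    and "pauli_periodicity n U m"
    and "m \<ge> 1"
    and "V \<in> carrier_mat (2^n) (2^n)" and "U * V = 1\<^sub>m (2^n)" and "V * U = 1\<^sub>m (2^n)"
  shows "controlled n U * controlled n V = 1\<^sub>m (2^(n+1))
       \<and> controlled n V * controlled n U = 1\<^sub>m (2^(n+1))
       \<and> V \<in> clifford_level n 2
       \<and> pauli_periodicity n V m
       \<and> controlled n V \<in> clifford_level (n+1) (m+2) - clifford_level (n+1) (m+1)
       \<and> controlled n U \<in> clifford_level (n+1) (m+2) - clifford_level (n+1) (m+1)"
proof -
  have U: "unitary_mat (2^n) U" using assms(2) unfolding clifford_level_2 by blast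
  have V_eq: "V = adj U" using unitary_mat_inverse_eq_adj[OF U assms(5,7)] .
  have V: "V \<in> clifford_level n 2" unfolding V_eq using clifford_level_2_adj[OF assms(2)] .
  have perV: "pauli_periodicity n V m"
    unfolding V_eq using pauli_periodicity_adj[OF unitary_mat_carrier[OF U]] assms(3) by simp
  have "controlled n U * controlled n V = 1\<^sub>m (2^(n+1))" "controlled n V * controlled n U = 1\<^sub>m (2^(n+1))"
    using controlled_mult[OF unitary_mat_carrier[OF U] assms(5)] controlled_mult[OF assms(5) unitary_mat_carrier[OF U]]
      assms(6,7) controlled_one by simp_all
  then show ?thesis
    using V perV controlled_clifford_level_exact[OF V perV assms(4)]
      controlled_clifford_level_exact[OF assms(2-4)] by blast
qed

end
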